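(* Let $1\le p<\infty$, let $w$ be a weight, and let $\mathcal B$ be a collection of balls in $\mathbb{R}^n$ whose union is $\mathbb{R}^n$. If the maximal operator $M_{\mathcal B}$ is bounded from $\mathcal M^{p}(\varphi,w)$ to $W\mathcal M^{p}(\varphi,w)$ (in particular, if it is bounded on $\mathcal M^{p}(\varphi,w)$), then $w\in A_{\mathcal B}(\mathcal M^{p}(\varphi))$. Moreover, the operator norm of $M_{\mathcal B}$ from $\mathcal M^{p}(\varphi,w)$ to $W\mathcal M^{p}(\varphi,w)$ is bounded below by $[w]_{A_{\mathcal B}(\mathcal M^{p}(\varphi))}$.
   Context: A weight is a nonnegative locally integrable function on $\mathbb{R}^n$. Let $\varphi$ be a function from the set of Euclidean balls of $\mathbb{R}^n$ to $(0,\infty)$; standing assumptions: $\varphi$ is doubling ($\varphi(2B)\le C\varphi(B)$) and reverse doubling (there are $\delta>0$, $C$ with $\varphi(B_1)/\varphi(B_2)\le C(|B_1|/|B_2|)^\delta$ for balls $B_1\subset B_2$), and characteristic functions of balls belong to $\mathcal M^{p}(\varphi,w)$. $\mathcal M^{p}(\varphi,w)$ is the space of measurable $f$ with $\|f\|_{\mathcal M^{p}(\varphi,w)}:=\sup_B\big(\varphi(B)^{-1}\int_B|f|^pw\big)^{1/p}<\infty$ (supremum over all balls). $W\mathcal M^{p}(\varphi,w)$ is the space of measurable $f$ with $\|f\|_{W\mathcal M^{p}(\varphi,w)}:=\sup_B\sup_{t>0} t\, w(\{x\in B:|f(x)|>t\})^{1/p}\varphi(B)^{-1/p}<\infty$.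 For a Banach lattice $X$, the Köthe dual $X'$ has norm $\|g\|_{X'}:=\sup\{\int|fg|:\|f\|_X\le1\}$. $M_{\mathcal B}f(x):=\sup\{|B|^{-1}\int_B|f|: x\in B\in\mathcal B\}$. $[w]_{A_{\mathcal B}(\mathcal M^{p}(\varphi))}:=\sup_{B\in\mathcal B}\|\chi_B\|_{\mathcal M^{p}(\varphi,w)}\|\chi_B\|_{\mathcal M^{p}(\varphi,w)'}/|B|$, and $A_{\mathcal B}(\mathcal M^{p}(\varphi))$ is the class of weights for which it is finite. *)

theory Defs
  imports "HOL-Analysis.Analysis"
begin

definition balls :: "'a::euclidean_space set set" where
  "balls = {ball x r | x r. r > 0}"

definition enn_root :: "real \<Rightarrow> ennreal \<Rightarrow> ennreal" where
  "enn_root p t = (if t = \<infinity> then \<infinity> else ennreal (enn2real t powr (1 / p)))"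

definition is_weight :: "('a::euclidean_space \<Rightarrow> real) \<Rightarrow> bool" where
  "is_weight w \<longleftrightarrow> w \<in> borel_measurable lebesgue \<and> (\<forall>x. 0 \<le> w x)
     \<and> (\<forall>K. compact K \<longrightarrow> set_integrable lebesgue K w)"

definition wmeas :: "('a::euclidean_space \<Rightarrow> real) \<Rightarrow> 'a set \<Rightarrow> ennreal" where
  "wmeas w E = (\<integral>\<^sup>+ x \<in> E. ennreal (w x) \<partial>lebesgue)"

definition morrey_norm :: "real \<Rightarrow> ('a::euclidean_space set \<Rightarrow> real) \<Rightarrow> ('a \<Rightarrow> real)
    \<Rightarrow> ('a \<Rightarrow> real) \<Rightarrow> ennreal" where
  "morrey_norm p \<phi> w f = (SUP B \<in> balls.
      enn_root p ((\<integral>\<^sup>+ x \<in> B. ennreal (\<bar>f x\<bar> powr p * w x) \<partial>lebesgue) / ennreal (\<phi> B)))"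

definition morrey_space :: "real \<Rightarrow> ('a::euclidean_space set \<Rightarrow> real) \<Rightarrow> ('a \<Rightarrow> real)
    \<Rightarrow> ('a \<Rightarrow> real) set" where
  "morrey_space p \<phi> w = {f. f \<in> borel_measurable lebesgue \<and> morrey_norm p \<phi> w f < \<infinity>}"

text \<open>Weighted weak Morrey norm of WM^p(phi,w), for [0,\<infinity>]-valued functions
  (a real function f is treated via its modulus |f|).\<close>
definition weak_morrey_norm :: "real \<Rightarrow> ('a::euclidean_space set \<Rightarrow> real) \<Rightarrow> ('a \<Rightarrow> real)
    \<Rightarrow> ('a \<Rightarrow> ennreal) \<Rightarrow> ennreal" where
  "weak_morrey_norm p \<phi> w f = (SUP B \<in> balls. SUP t \<in> {0<..}.
      ennreal t * enn_root p (wmeas w {x \<in> B. f x > ennreal t} / ennreal (\<phi> B)))"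

definition morrey_dual_norm :: "real \<Rightarrow> ('a::euclidean_space set \<Rightarrow> real) \<Rightarrow> ('a \<Rightarrow> real)
    \<Rightarrow> ('a \<Rightarrow> real) \<Rightarrow> ennreal" where
  "morrey_dual_norm p \<phi> w g = (SUP f \<in> {f. f \<in> borel_measurable lebesgue \<and> morrey_norm p \<phi> w f \<le> 1}.
      \<integral>\<^sup>+ x. ennreal \<bar>f x * g x\<bar> \<partial>lebesgue)"

definition maximal_op :: "'a::euclidean_space set set \<Rightarrow> ('a \<Rightarrow> real) \<Rightarrow> 'a \<Rightarrow> ennreal" where
  "maximal_op \<B> f x = (SUP B \<in> {B \<in> \<B>. x \<in> B}.
      (\<integral>\<^sup>+ y \<in> B. ennreal \<bar>f y\<bar> \<partial>lebesgue) / emeasure lebesgue B)"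

definition A_const :: "'a::euclidean_space set set \<Rightarrow> real \<Rightarrow> ('a set \<Rightarrow> real) \<Rightarrow> ('a \<Rightarrow> real) \<Rightarrow> ennreal" where
  "A_const \<B> p \<phi> w = (SUP B \<in> \<B>.
      morrey_norm p \<phi> w (indicator B) * morrey_dual_norm p \<phi> w (indicator B) / emeasure lebesgue B)"

end

theory Submission
  imports Defs
begin

text \<open>
  Fix \<open>B \<in> \<B>\<close> and \<open>f\<close> in the unit ball of \<open>M\<^sup>p(\<phi>,w)\<close>, and put \<open>g = f \<chi>\<^sub>B\<close>.
  On \<open>B\<close> the maximal function \<open>M\<^sub>\<B> g\<close> dominates the average \<open>a\<close> of \<open>|f|\<close> over \<open>B\<close>,
  so for every \<open>t < a\<close> the level set \<open>{M\<^sub>\<B> g > t}\<close> contains \<open>B\<close>, and the weak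
  Morrey norm of \<open>M\<^sub>\<B> g\<close> is at least \<open>t \<parallel>\<chi>\<^sub>B\<parallel>\<close>. The weak-type bound gives
  \<open>a \<parallel>\<chi>\<^sub>B\<parallel> \<le> C \<parallel>g\<parallel> \<le> C\<close>; taking the supremum over \<open>f\<close> yields
  \<open>\<parallel>\<chi>\<^sub>B\<parallel> \<parallel>\<chi>\<^sub>B\<parallel>' / |B| \<le> C\<close>.
\<close>

lemma ennreal_mult_le_if_approx_below:
  fixes A N Y :: ennreal
  assumes "\<And>t. 0 < t \<Longrightarrow> ennreal t < A \<Longrightarrow> ennreal t * N \<le> Y"
  shows "A * N \<le> Y"
proof -
  have "A * N = (SUP x\<in>{..<A}. x) * N"
    by (simp add: Sup_lessThan)
  also have "\<dots> = (SUP x\<in>{..<A}. x * N)"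
    by (rule SUP_mult_right_ennreal)
  also have "\<dots> \<le> Y"
  proof (rule SUP_least)
    fix x assume "x \<in> {..<A}"
    then have "x < A" by simp
    then obtain t where t: "x = ennreal t" "0 \<le> t"
      using less_top_ennreal order.strict_trans2 top_greatest by metis
    show "x * N \<le> Y"
    proof (cases "t = 0")
      case False
      then show ?thesis using t \<open>x < A\<close> assms by simp
    qed (use t in simp)
  qed
  finally show ?thesis .
qed

lemma enn_root_mono:
  assumes "0 < p" "a \<le> b"
  shows "enn_root p a \<le> enn_root p b"
proof (cases "b = \<infinity>")
  case False
  then have "a \<noteq> \<infinity>" using assms(2) by (auto simp: top_unique)
  moreover have "enn2real a powr (1/p) \<le> enn2real b powr (1/p)"
    using assms False by (intro powr_mono2 enn2real_mono) (auto simp: top.not_eq_extremum)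
  ultimately show ?thesis
    using False by (simp add: enn_root_def ennreal_leI)
qed (simp add: enn_root_def)

lemma morrey_norm_mono:
  fixes f g :: "'a::euclidean_space \<Rightarrow> real"
  assumes "0 < p" "\<And>x. 0 \<le> w x" "\<And>x. \<bar>g x\<bar> \<le> \<bar>f x\<bar>"
  shows "morrey_norm p \<phi> w g \<le> morrey_norm p \<phi> w f"
  unfolding morrey_norm_def
proof (rule SUP_mono)
  fix B :: "'a set" assume "B \<in> balls"
  have "ennreal (\<bar>g x\<bar> powr p * w x) \<le> ennreal (\<bar>f x\<bar> powr p * w x)" for x
    using assms by (intro ennreal_leI mult_right_mono powr_mono2) auto
  then show "\<exists>B'\<in>balls.
      enn_root p ((\<integral>\<^sup>+ x\<in>B. ennreal (\<bar>g x\<bar> powr p * w x) \<partial>lebesgue) / ennreal (\<phi> B))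
      \<le> enn_root p ((\<integral>\<^sup>+ x\<in>B'. ennreal (\<bar>f x\<bar> powr p * w x) \<partial>lebesgue) / ennreal (\<phi> B'))"
    using \<open>B \<in> balls\<close> assms(1)
    by (intro bexI[of _ B] enn_root_mono divide_right_mono_ennreal nn_integral_mono
        mult_right_mono) auto
qed

lemma mult_morrey_norm_indicator_le_weak_morrey_norm:
  fixes F :: "'a::euclidean_space \<Rightarrow> ennreal"
  assumes p: "0 < p" and w: "\<And>x. 0 \<le> w x" and F: "\<And>x. x \<in> B \<Longrightarrow> A \<le> F x"
  shows "A * morrey_norm p \<phi> w (indicator B) \<le> weak_morrey_norm p \<phi> w F"
proof (rule ennreal_mult_le_if_approx_below)
  fix t assume "0 < t" "ennreal t < A"
  have F_gt: "ennreal t < F x" if "x \<in> B" for x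
    using \<open>ennreal t < A\<close> F[OF that] by (rule order.strict_trans2)
  have "ennreal t * enn_root p ((\<integral>\<^sup>+ x\<in>B'. ennreal (\<bar>indicator B x :: real\<bar> powr p * w x)
      \<partial>lebesgue) / ennreal (\<phi> B')) \<le> weak_morrey_norm p \<phi> w F" if "B' \<in> balls" for B'
  proof -
    have "(\<integral>\<^sup>+ x\<in>B'. ennreal (\<bar>indicator B x :: real\<bar> powr p * w x) \<partial>lebesgue)
        \<le> wmeas w {x \<in> B'. F x > ennreal t}"
      unfolding wmeas_def
      using F_gt by (intro nn_integral_mono) (auto simp: indicator_def)
    then have "ennreal t * enn_root p ((\<integral>\<^sup>+ x\<in>B'. ennreal (\<bar>indicator B x :: real\<bar> powr p
        * w x) \<partial>lebesgue) / ennreal (\<phi> B'))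
        \<le> ennreal t * enn_root p (wmeas w {x \<in> B'. F x > ennreal t} / ennreal (\<phi> B'))"
      using p by (intro mult_left_mono enn_root_mono divide_right_mono_ennreal) auto
    also have "\<dots> \<le> weak_morrey_norm p \<phi> w F"
      unfolding weak_morrey_norm_def using that \<open>0 < t\<close>
      by (intro SUP_upper2[of B'] SUP_upper2[of t]) auto
    finally show ?thesis .
  qed
  then show "ennreal t * morrey_norm p \<phi> w (indicator B) \<le> weak_morrey_norm p \<phi> w F"
    unfolding morrey_norm_def by (simp add: SUP_mult_left_ennreal SUP_least)
qed

lemma average_le_maximal_op:
  assumes "B \<in> \<B>" "x \<in> B"
  shows "(\<integral>\<^sup>+ y\<in>B. ennreal \<bar>f y\<bar> \<partial>lebesgue) / emeasure lebesgue B \<le> maximal_op \<B> f x"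
  unfolding maximal_op_def using assms by (intro SUP_upper) auto

lemma average_mult_morrey_norm_indicator_le:
  assumes p: "0 < p" and w: "\<And>x. 0 \<le> w x"
    and B: "B \<in> \<B>" "B \<in> sets lebesgue"
    and bounded: "\<forall>f \<in> morrey_space p \<phi> w.
           weak_morrey_norm p \<phi> w (maximal_op \<B> f) \<le> ennreal C * morrey_norm p \<phi> w f"
    and f: "f \<in> borel_measurable lebesgue" "morrey_norm p \<phi> w f \<le> 1"
  shows "(\<integral>\<^sup>+ y\<in>B. ennreal \<bar>f y\<bar> \<partial>lebesgue) / emeasure lebesgue B
           * morrey_norm p \<phi> w (indicator B) \<le> ennreal C"
proof -
  define g where "g x = f x * indicator B x" for x
  have g_le_f: "\<bar>g x\<bar> \<le> \<bar>f x\<bar>" for x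
    by (simp add: g_def indicator_def)
  have g_norm: "morrey_norm p \<phi> w g \<le> 1"
    using morrey_norm_mono[OF p w g_le_f] f(2) by (rule order_trans)
  have "g \<in> morrey_space p \<phi> w"
    using g_norm f(1) B(2) unfolding morrey_space_def g_def
    by (auto simp: le_less_trans[OF _ ennreal_one_less_top])
  have "(\<integral>\<^sup>+ y\<in>B. ennreal \<bar>f y\<bar> \<partial>lebesgue) = (\<integral>\<^sup>+ y\<in>B. ennreal \<bar>g y\<bar> \<partial>lebesgue)"
    by (intro nn_integral_cong) (simp add: g_def indicator_def)
  then have "(\<integral>\<^sup>+ y\<in>B. ennreal \<bar>f y\<bar> \<partial>lebesgue) / emeasure lebesgue B
      * morrey_norm p \<phi> w (indicator B) \<le> weak_morrey_norm p \<phi> w (maximal_op \<B> g)"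
    using B(1) by (auto intro: mult_morrey_norm_indicator_le_weak_morrey_norm[OF p w]
        average_le_maximal_op)
  also have "\<dots> \<le> ennreal C * morrey_norm p \<phi> w g"
    using bounded \<open>g \<in> morrey_space p \<phi> w\<close> by blast
  also have "\<dots> \<le> ennreal C"
    using g_norm mult_left_mono[of _ 1 "ennreal C"] by simp
  finally show ?thesis .
qed

lemma A_const_summand_le:
  assumes p: "0 < p" and w: "\<And>x. 0 \<le> w x"
    and B: "B \<in> \<B>" "B \<in> sets lebesgue"
    and bounded: "\<forall>f \<in> morrey_space p \<phi> w.
           weak_morrey_norm p \<phi> w (maximal_op \<B> f) \<le> ennreal C * morrey_norm p \<phi> w f"
  shows "morrey_norm p \<phi> w (indicator B) * morrey_dual_norm p \<phi> w (indicator B)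
           / emeasure lebesgue B \<le> ennreal C"
proof -
  have dual_integral: "(\<integral>\<^sup>+ x. ennreal \<bar>f x * indicator B x\<bar> \<partial>lebesgue)
      = (\<integral>\<^sup>+ x\<in>B. ennreal \<bar>f x\<bar> \<partial>lebesgue)" for f :: "'a \<Rightarrow> real"
    by (intro nn_integral_cong) (simp add: indicator_def)
  have "morrey_norm p \<phi> w (indicator B) * morrey_dual_norm p \<phi> w (indicator B)
      / emeasure lebesgue B
      = (SUP f \<in> {f. f \<in> borel_measurable lebesgue \<and> morrey_norm p \<phi> w f \<le> 1}.
          (\<integral>\<^sup>+ y\<in>B. ennreal \<bar>f y\<bar> \<partial>lebesgue) / emeasure lebesgue B
          * morrey_norm p \<phi> w (indicator B))"
    unfolding morrey_dual_norm_def dual_integral divide_ennreal_def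
    by (simp add: SUP_mult_left_ennreal SUP_mult_right_ennreal ac_simps)
  also have "\<dots> \<le> ennreal C"
    using average_mult_morrey_norm_indicator_le[OF p w B bounded] by (auto intro: SUP_least)
  finally show ?thesis .
qed

theorem theorem3p1:
  fixes p :: real and \<phi> :: "'a::euclidean_space set \<Rightarrow> real" and w :: "'a \<Rightarrow> real"
    and \<B> :: "'a set set" and C :: real
  assumes p: "1 \<le> p"
    and phi_pos: "\<forall>B \<in> balls. 0 < \<phi> B"
    and phi_doubling: "\<exists>D. \<forall>x r. r > 0 \<longrightarrow> \<phi> (ball x (2 * r)) \<le> D * \<phi> (ball x r)"
    and phi_rev_doubling: "\<exists>\<delta> > 0. \<exists>D. \<forall>B1 \<in> balls. \<forall>B2 \<in> balls. B1 \<subseteq> B2 \<longrightarrow>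
           \<phi> B1 / \<phi> B2 \<le> D * (measure lebesgue B1 / measure lebesgue B2) powr \<delta>"
    and w: "is_weight w"
    and chi_balls: "\<forall>B \<in> balls. indicator B \<in> morrey_space p \<phi> w"
    and B_balls: "\<B> \<subseteq> balls"
    and B_cover: "\<Union>\<B> = UNIV"
    and bounded: "\<forall>f \<in> morrey_space p \<phi> w.
           weak_morrey_norm p \<phi> w (maximal_op \<B> f) \<le> ennreal C * morrey_norm p \<phi> w f"
  shows "A_const \<B> p \<phi> w < \<infinity> \<and> A_const \<B> p \<phi> w \<le> ennreal C"
proof -
  have "B \<in> sets lebesgue" if "B \<in> \<B>" for B
    using that B_balls unfolding balls_def by (auto intro: fmeasurableD[OF lmeasurable_ball])
  moreover have "0 \<le> w x" for x
    using w by (simp add: is_weight_def)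
  ultimately have "A_const \<B> p \<phi> w \<le> ennreal C"
    unfolding A_const_def using p bounded by (intro SUP_least A_const_summand_le) auto
  then show ?thesis
    using le_less_trans by fastforce
qed

end
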